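(* Suppose $r>2$, $0<\beta<1$ and $r^2<\frac{(1+\beta)^2}{\beta}$. Then $$\frac{1}{r^{1+\beta}}\frac{(1+\beta)^{1+\beta}}{\beta^\beta}<\left(\frac2r\right)^{1+\beta}\left(\frac4{r^2}\right)^{-\beta}\left(\sqrt{1-\frac4{r^2}}+1\right)^{\beta-1}=\left(\frac r2-\sqrt{\frac{r^2}{4}-1}\right)^{1-\beta}.$$ *)

theory Defs
  imports Complex_Main
begin

end

theory Submission
  imports Defs
begin

(* Let x = r/2 - sqrt (r^2/4 - 1) be the smaller root of x^2 - r x + 1, so that r = x + 1/x
   and 0 < x < 1.  Collecting the powers of 2/r, the identity reduces to
   x = 2 / (r (1 + sqrt (1 - 4/r^2))).  Substituting r = (1 + t)/x with t = x^2, the inequality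
   becomes (1+\<beta>)^(1+\<beta>) / \<beta>^\<beta> < (1+t)^(1+\<beta>) / t^\<beta>, and by the weighted AM-GM
   inequality the right-hand side is strictly minimal at t = \<beta>.  Finally t \<noteq> \<beta>: the bound
   on r^2 reads t + 1/t < \<beta> + 1/\<beta>, and u + 1/u is strictly decreasing on (0, 1]. *)

lemma ln_less_minus_one: "0 < (x::real) \<Longrightarrow> x \<noteq> 1 \<Longrightarrow> ln x < x - 1"
  using ln_le_minus_one[of x] ln_eq_minus_one[of x] by fastforce

lemma weighted_arith_geom_mean_strict:
  fixes a b w :: real
  assumes "0 < a" "0 < b" "a \<noteq> b" "0 < w" "w < 1"
  shows "a powr w * b powr (1 - w) < w * a + (1 - w) * b"
proof -
  define m where "m = w * a + (1 - w) * b"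
  have m: "0 < m"
    unfolding m_def using assms by (intro add_pos_pos mult_pos_pos) auto
  have la: "w * ln (a / m) \<le> w * (a / m - 1)" and lb: "(1 - w) * ln (b / m) \<le> (1 - w) * (b / m - 1)"
    using assms m ln_le_minus_one by (simp_all add: mult_left_mono)
  have "a / m \<noteq> 1 \<or> b / m \<noteq> 1"
    using assms(3) by auto
  then have "w * ln (a / m) + (1 - w) * ln (b / m) < w * (a / m - 1) + (1 - w) * (b / m - 1)"
  proof
    assume "a / m \<noteq> 1"
    then have "w * ln (a / m) < w * (a / m - 1)"
      using assms m by (simp add: ln_less_minus_one)
    then show ?thesis using lb by linarith
  next
    assume "b / m \<noteq> 1"
    then have "(1 - w) * ln (b / m) < (1 - w) * (b / m - 1)"
      using assms m by (simp add: ln_less_minus_one)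
    then show ?thesis using la by linarith
  qed
  also have "\<dots> = 0"
    using m by (simp add: m_def field_simps)
  finally have "w * ln a + (1 - w) * ln b < ln m"
    using assms m by (simp add: ln_div algebra_simps)
  then have "exp (w * ln a + (1 - w) * ln b) < m"
    using m by (metis exp_less_cancel_iff exp_ln)
  then show ?thesis
    using assms by (simp add: powr_def m_def flip: exp_add)
qed

lemma one_plus_powr_div_powr_strict_min:
  fixes t \<beta> :: real
  assumes "0 < t" "0 < \<beta>" "t \<noteq> \<beta>"
  shows "(1 + \<beta>) powr (1 + \<beta>) / \<beta> powr \<beta> < (1 + t) powr (1 + \<beta>) / t powr \<beta>"
proof -
  define w where "w = \<beta> / (1 + \<beta>)"
  have w: "0 < w" "w < 1"
    using assms by (simp_all add: w_def)
  have "(t / \<beta>) powr w * 1 powr (1 - w) < w * (t / \<beta>) + (1 - w) * 1"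
    using assms w by (intro weighted_arith_geom_mean_strict) auto
  also have "\<dots> = (1 + t) / (1 + \<beta>)"
    using assms by (simp add: w_def field_simps)
  finally have "((t / \<beta>) powr w) powr (1 + \<beta>) < ((1 + t) / (1 + \<beta>)) powr (1 + \<beta>)"
    using assms by (intro powr_less_mono2) auto
  then have "t powr \<beta> / \<beta> powr \<beta> < (1 + t) powr (1 + \<beta>) / (1 + \<beta>) powr (1 + \<beta>)"
    using assms by (simp add: powr_powr powr_divide w_def)
  then show ?thesis
    using assms by (simp add: divide_less_eq less_divide_eq mult.commute)
qed

lemma plus_inverse_less_imp_less:
  fixes a b :: real
  assumes "0 < a" "0 < b" "a * b < 1" "a + 1 / a < b + 1 / b"
  shows "b < a"
proof -
  have "a + 1 / a - (b + 1 / b) = (a - b) * (a * b - 1) / (a * b)"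
    using assms by (simp add: field_simps)
  then have "(a - b) * (a * b - 1) / (a * b) < 0"
    using assms(4) by linarith
  moreover have "0 < a * b"
    using assms by simp
  ultimately have "(a - b) * (a * b - 1) < 0"
    by (simp add: divide_less_0_iff)
  then show ?thesis
    using assms(3) by (simp add: mult_less_0_iff)
qed

definition small_root :: "real \<Rightarrow> real" where
  "small_root r = r / 2 - sqrt (r^2 / 4 - 1)"

lemma sqrt_quarter_sq_minus_one:
  fixes r :: real
  assumes "2 \<le> r"
  shows "0 \<le> r^2 / 4 - 1" "(sqrt (r^2 / 4 - 1))^2 = r^2 / 4 - 1"
proof -
  have "2^2 \<le> r^2"
    using assms by (intro power_mono) auto
  then show "0 \<le> r^2 / 4 - 1" "(sqrt (r^2 / 4 - 1))^2 = r^2 / 4 - 1"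
    by simp_all
qed

lemma small_root_pos:
  assumes "2 \<le> r"
  shows "0 < small_root r"
proof -
  have "sqrt (r^2 / 4 - 1) < sqrt ((r / 2)^2)"
    by (intro real_sqrt_less_mono) (simp add: power_divide)
  then show ?thesis
    using assms by (simp add: small_root_def)
qed

lemma small_root_mult_conj:
  "2 \<le> r \<Longrightarrow> small_root r * (r - small_root r) = 1"
  unfolding small_root_def
  using sqrt_quarter_sq_minus_one[of r] by (simp add: algebra_simps power2_eq_square)

lemma small_root_plus_inverse: "2 \<le> r \<Longrightarrow> small_root r + 1 / small_root r = r"
  using small_root_pos[of r] small_root_mult_conj[of r] by (simp add: field_simps)

lemma small_root_less_one:
  assumes "2 < r"
  shows "small_root r < 1"
proof -
  have "0 \<le> sqrt (r^2 / 4 - 1)"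
    using sqrt_quarter_sq_minus_one(1) assms by simp
  then have "1 < r - small_root r"
    using assms unfolding small_root_def by linarith
  then have "small_root r * 1 < small_root r * (r - small_root r)"
    using assms small_root_pos[of r] by (intro mult_strict_left_mono) auto
  then show ?thesis
    using assms small_root_mult_conj[of r] by simp
qed

lemma small_root_mult_sqrt:
  assumes "2 \<le> r"
  shows "small_root r * r * (1 + sqrt (1 - 4 / r^2)) = 2"
proof -
  define d where "d = sqrt (r^2 / 4 - 1)"
  have d: "0 \<le> d" "d^2 = r^2 / 4 - 1"
    using assms sqrt_quarter_sq_minus_one[of r] by (simp_all add: d_def)
  have "(2 * d / r)^2 = 4 * d^2 / r^2"
    by (simp add: power_divide power_mult_distrib)
  also have "\<dots> = 1 - 4 / r^2"
    using assms d(2) by (simp add: field_simps)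
  finally have "1 - 4 / r^2 = (2 * d / r)^2" ..
  then have "sqrt (1 - 4 / r^2) = 2 * d / r"
    using assms d(1) by simp
  then have "small_root r * r * (1 + sqrt (1 - 4 / r^2)) = (r / 2 - d) * (r + 2 * d)"
    using assms unfolding small_root_def d_def[symmetric] by (simp add: field_simps)
  also have "\<dots> = 2"
    using d(2) by (simp add: algebra_simps power2_eq_square)
  finally show ?thesis .
qed

lemma small_root_powr_eq:
  assumes "2 \<le> r"
  shows "(2 / r) powr (1 + \<beta>) * (4 / r^2) powr (- \<beta>) * (sqrt (1 - 4 / r^2) + 1) powr (\<beta> - 1)
    = small_root r powr (1 - \<beta>)"
proof -
  define s where "s = sqrt (1 - 4 / r^2)"
  have r: "0 < r"
    using assms by simp
  have prod: "small_root r * r * (1 + s) = 2"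
    using small_root_mult_sqrt[OF assms] by (simp add: s_def)
  have "0 < small_root r * r"
    using small_root_pos[OF assms] r by simp
  then have s: "0 < 1 + s"
    using prod zero_less_mult_pos[of "small_root r * r" "1 + s"] by simp
  have root: "small_root r = (2 / r) / (1 + s)"
    using prod r s by (simp add: divide_divide_eq_left eq_divide_eq mult.assoc)
  have "(4 / r^2) powr (- \<beta>) = ((2 / r) powr 2) powr (- \<beta>)"
    using r by (simp add: power_divide)
  then have four: "(4 / r^2) powr (- \<beta>) = (2 / r) powr (2 * - \<beta>)"
    by (simp only: powr_powr)
  have "(2 / r) powr (1 + \<beta>) * (4 / r^2) powr (- \<beta>) = (2 / r) powr (1 + \<beta> + 2 * - \<beta>)"
    unfolding four by (rule powr_add[symmetric])
  also have "\<dots> = (2 / r) powr (1 - \<beta>)"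
    by (intro arg_cong[of _ _ "\<lambda>a. (2 / r) powr a"]) simp
  finally have "(2 / r) powr (1 + \<beta>) * (4 / r^2) powr (- \<beta>) * (s + 1) powr (\<beta> - 1)
      = (2 / r) powr (1 - \<beta>) * (1 + s) powr (- (1 - \<beta>))"
    by (simp add: add.commute)
  also have "\<dots> = (2 / r) powr (1 - \<beta>) / (1 + s) powr (1 - \<beta>)"
    by (simp only: powr_minus_divide times_divide_eq_right mult_1_right)
  also have "\<dots> = small_root r powr (1 - \<beta>)"
    unfolding root by (rule powr_divide[symmetric])
  finally show ?thesis
    unfolding s_def .
qed

lemma plus_inverse_powr_less:
  fixes x \<beta> :: real
  assumes "0 < x" "0 < \<beta>" "x^2 \<noteq> \<beta>"
  shows "1 / (x + 1 / x) powr (1 + \<beta>) * ((1 + \<beta>) powr (1 + \<beta>) / \<beta> powr \<beta>)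
    < x powr (1 - \<beta>)"
proof -
  define t where "t = x^2"
  have t: "0 < t" "t \<noteq> \<beta>"
    using assms by (simp_all add: t_def)
  have "x + 1 / x = (1 + t) / x"
    using assms by (simp add: t_def field_simps power2_eq_square)
  then have sum: "1 / (x + 1 / x) powr (1 + \<beta>) = x powr (1 + \<beta>) / (1 + t) powr (1 + \<beta>)"
    using assms t by (simp add: powr_divide)
  have "1 / (x + 1 / x) powr (1 + \<beta>) * ((1 + \<beta>) powr (1 + \<beta>) / \<beta> powr \<beta>)
      < x powr (1 + \<beta>) / (1 + t) powr (1 + \<beta>) * ((1 + t) powr (1 + \<beta>) / t powr \<beta>)"
    unfolding sum using assms t by (intro mult_strict_left_mono one_plus_powr_div_powr_strict_min) auto
  also have "\<dots> = x powr (1 + \<beta>) / t powr \<beta>"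
    using t by simp
  also have "\<dots> = x powr (1 + \<beta>) / x powr (2 * \<beta>)"
    using assms by (simp add: t_def powr_powr flip: powr_numeral)
  also have "\<dots> = x powr (1 - \<beta>)"
    by (simp flip: powr_diff)
  finally show ?thesis .
qed

theorem lemma3:
  fixes r \<beta> :: real
  assumes "r > 2" and "0 < \<beta>" and "\<beta> < 1"
    and "r^2 < (1 + \<beta>)^2 / \<beta>"
  shows "1 / r powr (1 + \<beta>) * ((1 + \<beta>) powr (1 + \<beta>) / \<beta> powr \<beta>)
           < (2 / r) powr (1 + \<beta>) * (4 / r^2) powr (- \<beta>)
             * (sqrt (1 - 4 / r^2) + 1) powr (\<beta> - 1)
         \<and> (2 / r) powr (1 + \<beta>) * (4 / r^2) powr (- \<beta>)
             * (sqrt (1 - 4 / r^2) + 1) powr (\<beta> - 1)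
           = (r / 2 - sqrt (r^2 / 4 - 1)) powr (1 - \<beta>)"
proof -
  define x where "x = small_root r"
  have r: "2 \<le> r"
    using assms(1) by simp
  have x: "0 < x" "x < 1"
    using small_root_pos[OF r] small_root_less_one[OF assms(1)] by (simp_all add: x_def)
  have r_eq: "r = x + 1 / x"
    using small_root_plus_inverse[OF r] by (simp add: x_def)
  have "x^2 + 1 / x^2 + 2 = r^2"
    unfolding r_eq using x by (simp add: field_simps power2_eq_square)
  moreover have "(1 + \<beta>)^2 / \<beta> = \<beta> + 1 / \<beta> + 2"
    using assms(2) by (simp add: field_simps power2_eq_square)
  ultimately have "x^2 + 1 / x^2 < \<beta> + 1 / \<beta>"
    using assms(4) by linarith
  moreover have "x^2 * \<beta> < 1 * 1"
    using x assms(2,3) by (intro mult_strict_mono) (simp_all add: power_less_one_iff)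
  ultimately have "\<beta> < x^2"
    using x assms(2) plus_inverse_less_imp_less[of "x^2" \<beta>] by simp
  then have "1 / r powr (1 + \<beta>) * ((1 + \<beta>) powr (1 + \<beta>) / \<beta> powr \<beta>) < small_root r powr (1 - \<beta>)"
    using plus_inverse_powr_less[OF x(1) assms(2), folded r_eq] by (simp add: x_def)
  then show ?thesis
    using small_root_powr_eq[OF r] by (simp add: small_root_def)
qed

end
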